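(* Let $K : \mathbb{B}^n \times \mathbb{B}^r \to \mathbb{B}$ and let $f_1, \ldots, f_r : \mathbb{B}^n \to \mathbb{B}$ be such that for all $i \in \{1,\dots,r\}$ and all $\mathbf{x}\in\mathbb B^n$, $$f_i(\mathbf{x}) = \exists u_{i+1},\ldots,u_r\; K(\mathbf{x}, f_1(\mathbf{x}), \ldots, f_{i-1}(\mathbf{x}), 1, u_{i+1}, \ldots, u_r).$$ Then for every $\mathbf{x} \in \mathrm{Dom}(K)$ we have $K(\mathbf{x}, f_1(\mathbf{x}), \ldots, f_r(\mathbf{x})) = 1$.
   Context: $\mathbb{B}=\{0,1\}$. For a boolean function $g$, $\exists y\, g$ denotes $g|_{y=0}+g|_{y=1}$ (logical OR of the two restrictions), extended to several variables by iteration. $\mathrm{Dom}(K) = \{\mathbf x \in \mathbb B^n \mid \exists \mathbf u\in\mathbb B^r\; K(\mathbf x,\mathbf u)=1\}$. *)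

theory Defs
  imports Main
begin

text \<open>Boolean vectors in B^m are represented as bool lists of length m.
  A boolean function K : B^n x B^r -> B is a curried function on lists
  (only its values on lists of the right lengths matter).\<close>

definition Dom :: "nat \<Rightarrow> (bool list \<Rightarrow> bool list \<Rightarrow> bool) \<Rightarrow> bool list set" where
  "Dom r K = {x. \<exists>u. length u = r \<and> K x u}"

end

theory Submission
  imports Defs
begin

text \<open>The values f_1(x), ..., f_r(x) are the greedy choice that sets each coordinate to 1
  whenever some completion of the prefix chosen so far still satisfies K, and to 0 otherwise.
  Induction on i shows that the prefix f_1(x), ..., f_i(x) always extends to a satisfying
  assignment: if f_{i+1}(x) = 1 a completion exists by definition, and if f_{i+1}(x) = 0 then
  no completion starts with 1 after the prefix, so the completion guaranteed for i must start
  with 0. For i = 0 the extension exists because x lies in Dom(K).\<close>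

lemma greedy_choice_extends:
  fixes Q :: "bool list \<Rightarrow> bool"
  assumes "Q (b # v)"
  shows "\<exists>w. length w = length v \<and>
    Q ((\<exists>w. length w = length v \<and> Q (True # w)) # w)"
proof (cases "\<exists>w. length w = length v \<and> Q (True # w)")
  case True
  then show ?thesis by auto
next
  case False
  with assms have "Q (False # v)" by (cases b) auto
  then have "Q ((\<exists>w. length w = length v \<and> Q (True # w)) # v)"
    using False by (simp only: simp_thms)
  then show ?thesis by blast
qed

lemma greedy_prefix_extends:
  fixes K :: "bool list \<Rightarrow> bool list \<Rightarrow> bool" and f :: "nat \<Rightarrow> bool list \<Rightarrow> bool"
  assumes hf: "\<And>i. i \<in> {1..r} \<Longrightarrow>
      f i x = (\<exists>v. length v = r - i \<and> K x (map (\<lambda>j. f j x) [1..<i] @ [True] @ v))"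
    and dom: "x \<in> Dom r K"
    and "i \<le> r"
  shows "\<exists>v. length v = r - i \<and> K x (map (\<lambda>j. f j x) [1..<i+1] @ v)"
  using \<open>i \<le> r\<close>
proof (induction i)
  case 0
  then show ?case using dom by (simp add: Dom_def)
next
  case (Suc i)
  let ?p = "map (\<lambda>j. f j x) [1..<i+1]"
  from Suc obtain v where len_v: "length v = r - i" and sat: "K x (?p @ v)" by auto
  with Suc.prems obtain b v' where v: "v = b # v'" by (cases v) auto
  have len_v': "length v' = r - Suc i" using len_v v by simp
  have "f (Suc i) x = (\<exists>w. length w = length v' \<and> K x (?p @ True # w))"
    using hf[of "Suc i"] Suc.prems len_v' by simp
  with greedy_choice_extends[of "\<lambda>u. K x (?p @ u)" b v'] sat v
  obtain w where "length w = length v'" "K x (?p @ f (Suc i) x # w)" by auto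
  then show ?case using len_v' by (intro exI[of _ w]) simp
qed

theorem lemma1:
  fixes n r :: nat
    and K :: "bool list \<Rightarrow> bool list \<Rightarrow> bool"
    and f :: "nat \<Rightarrow> bool list \<Rightarrow> bool"
  assumes hf: "\<And>i x. i \<in> {1..r} \<Longrightarrow> length x = n \<Longrightarrow>
      f i x = (\<exists>v. length v = r - i \<and> K x (map (\<lambda>j. f j x) [1..<i] @ [True] @ v))"
  shows "\<forall>x. length x = n \<longrightarrow> x \<in> Dom r K \<longrightarrow> K x (map (\<lambda>j. f j x) [1..<r+1])"
proof (intro allI impI)
  fix x assume "length x = n" and "x \<in> Dom r K"
  then have "\<exists>v. length v = r - r \<and> K x (map (\<lambda>j. f j x) [1..<r+1] @ v)"
    using hf by (intro greedy_prefix_extends) auto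
  then show "K x (map (\<lambda>j. f j x) [1..<r+1])" by simp
qed

end
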